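(* Let $N\ge2$ and let $u\in C(\mathbb{R}^N,(0,\infty))$ be separable in $\mathbb{R}^N$, and assume there is no point $x^*\in\mathbb{R}^N$ such that $u$ is radially symmetric with respect to $x^*$. Let $\mathcal{L}$ be the set of all symmetry axes of $u$. Then: (i) for every $x\in\mathbb{R}^N$ there exists a unique $L_x\in\mathcal{L}$ with $x\in L_x$; consequently $L_y=L_x$ whenever $y\in L_x$; (ii) for all $x,y\in\mathbb{R}^N$, either $L_x=L_y$ or $L_x$ is parallel to $L_y$.
   Context: For an open half-space $H\subset\mathbb{R}^N$, $\sigma_H$ is the reflection across $\partial H$. A function $u\in C(\mathbb{R}^N,\mathbb{R})$ is separable in $\mathbb{R}^N$ if for every open half-space $H\subset\mathbb{R}^N$, either $u(x)\ge u(\sigma_Hx)$ for all $x\in H$, or $u(x)\le u(\sigma_Hx)$ for all $x\in H$. A line $L\subset\mathbb{R}^N$ is a symmetry axis of $u$ if for every $\alpha>0$, every affine hyperplane $V$ orthogonal to $L$, and the point $z\in L\cap V$, the restriction of $u$ to $S^{N-1}_\alpha(z)\cap V$ is constant, where $S^{N-1}_\alpha(z)$ is the sphere of radius $\alpha$ centered at $z$. $u$ is radially symmetric with respect to $x^*$ if $u(x)$ depends only on $|x-x^*|$. *)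

theory Defs
  imports "HOL-Analysis.Analysis"
begin

definition open_halfspace :: "'a::euclidean_space set \<Rightarrow> bool" where
  "open_halfspace H \<longleftrightarrow> (\<exists>a b. a \<noteq> 0 \<and> H = {x. a \<bullet> x > b})"

definition refl_hyp :: "'a::euclidean_space \<Rightarrow> real \<Rightarrow> 'a \<Rightarrow> 'a" where
  "refl_hyp a b x = x - (2 * (a \<bullet> x - b) / (a \<bullet> a)) *\<^sub>R a"

definition separable :: "('a::euclidean_space \<Rightarrow> real) \<Rightarrow> bool" where
  "separable u \<longleftrightarrow> (\<forall>a b. a \<noteq> 0 \<longrightarrow>
     (let H = {x. a \<bullet> x > b} in
       (\<forall>x\<in>H. u x \<ge> u (refl_hyp a b x)) \<or> (\<forall>x\<in>H. u x \<le> u (refl_hyp a b x))))"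

definition radially_symmetric :: "('a::euclidean_space \<Rightarrow> real) \<Rightarrow> 'a \<Rightarrow> bool" where
  "radially_symmetric u xs \<longleftrightarrow> (\<exists>f. \<forall>x. u x = f (norm (x - xs)))"

definition line_through :: "'a::real_vector \<Rightarrow> 'a \<Rightarrow> 'a set" where
  "line_through p d = {p + t *\<^sub>R d | t. True}"

definition is_line :: "'a::euclidean_space set \<Rightarrow> bool" where
  "is_line L \<longleftrightarrow> (\<exists>p d. d \<noteq> 0 \<and> L = line_through p d)"

definition orth_hyperplane :: "'a::euclidean_space set \<Rightarrow> 'a set \<Rightarrow> bool" where
  "orth_hyperplane L V \<longleftrightarrow>
     (\<exists>p d c. d \<noteq> 0 \<and> L = line_through p d \<and> V = {x. d \<bullet> x = c})"

definition symmetry_axis :: "('a::euclidean_space \<Rightarrow> real) \<Rightarrow> 'a set \<Rightarrow> bool" where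
  "symmetry_axis u L \<longleftrightarrow> is_line L \<and>
     (\<forall>\<alpha> V z. \<alpha> > 0 \<longrightarrow> orth_hyperplane L V \<longrightarrow> z \<in> L \<inter> V \<longrightarrow>
        (\<exists>c. \<forall>x \<in> sphere z \<alpha> \<inter> V. u x = c))"

definition parallel_lines :: "'a::euclidean_space set \<Rightarrow> 'a set \<Rightarrow> bool" where
  "parallel_lines L M \<longleftrightarrow>
     (\<exists>p q d. d \<noteq> 0 \<and> L = line_through p d \<and> M = line_through q d)"

text \<open>The (by part (i), unique) symmetry axis through x.\<close>
definition axis_at :: "('a::euclidean_space \<Rightarrow> real) \<Rightarrow> 'a \<Rightarrow> 'a set" where
  "axis_at u x = (THE L. symmetry_axis u L \<and> x \<in> L)"

end

theory Submission
  imports Defs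
begin

text \<open>Separability gives, for every direction \<open>a\<close>, either a symmetry hyperplane orthogonal to \<open>a\<close>
  or monotonicity of \<open>u\<close> along \<open>a\<close> or \<open>-a\<close>. If every direction had a symmetry hyperplane, \<open>u\<close>
  would be radially symmetric; so \<open>u\<close> is monotone along some unit vector \<open>d\<close> but not along \<open>-d\<close>.
  Reflections in symmetry hyperplanes preserve the closed cone of monotone directions, and
  composing two nearby ones is a small rotation. Hence on every half circle from \<open>d\<close> to \<open>-d\<close>
  some direction is one of translation invariance (otherwise \<open>d\<close> could be rotated into \<open>-d\<close>),
  these directions form a hyperplane, and \<open>u\<close> depends on \<open>n \<bullet> x\<close> only. A symmetry axis
  not parallel to \<open>n\<close> would make this profile even, which together with separability in a
  direction oblique to \<open>n\<close> forces \<open>u\<close> to be constant. So the axes are the lines parallel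
  to \<open>n\<close>.\<close>

section \<open>Reflections in hyperplanes\<close>

lemma inner_refl_hyp: "a \<noteq> 0 \<Longrightarrow> a \<bullet> refl_hyp a b x = 2 * b - a \<bullet> x"
  by (simp add: refl_hyp_def inner_diff_right field_simps)

lemma refl_hyp_fixpoint: "a \<bullet> x = b \<Longrightarrow> refl_hyp a b x = x"
  by (simp add: refl_hyp_def)

lemma refl_hyp_add: "refl_hyp a b (x + v) = refl_hyp a b x + refl_hyp a 0 v"
  by (simp add: refl_hyp_def inner_add_right algebra_simps flip: scaleR_add_left add_divide_distrib)

lemma refl_hyp_scaleR: "refl_hyp a 0 (c *\<^sub>R v) = c *\<^sub>R refl_hyp a 0 v"
  by (simp add: refl_hyp_def scaleR_diff_right)

lemma refl_hyp_normal: "a \<noteq> 0 \<Longrightarrow> refl_hyp a 0 (c *\<^sub>R a) = - (c *\<^sub>R a)"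
  by (simp add: refl_hyp_def scaleR_diff_left[symmetric])

lemma refl_hyp_refl_hyp:
  assumes "a \<noteq> 0"
  shows "refl_hyp a c (refl_hyp a b x) = x + (2 * (c - b) / (a \<bullet> a)) *\<^sub>R a"
proof -
  have "a \<bullet> a \<noteq> 0" using assms by simp
  then show ?thesis
    by (simp add: refl_hyp_def[of a c] inner_refl_hyp[OF assms])
       (simp add: refl_hyp_def algebra_simps diff_divide_distrib add_divide_distrib
          flip: scaleR_left_distrib scaleR_diff_left)
qed

lemma refl_hyp_involutive: "a \<noteq> 0 \<Longrightarrow> refl_hyp a b (refl_hyp a b x) = x"
  by (simp add: refl_hyp_refl_hyp)

lemma refl_hyp_shift:
  assumes "a \<noteq> 0"
  shows "refl_hyp a (a \<bullet> x + t * (a \<bullet> a) / 2) (x + t *\<^sub>R a) = x"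
proof -
  have "a \<bullet> a \<noteq> 0" using assms by simp
  then show ?thesis by (simp add: refl_hyp_def inner_add_right)
qed

section \<open>Symmetry hyperplanes and monotone directions\<close>

definition reflection_invariant :: "('a::euclidean_space \<Rightarrow> real) \<Rightarrow> 'a \<Rightarrow> real \<Rightarrow> bool" where
  "reflection_invariant u a b \<longleftrightarrow> (\<forall>x. u (refl_hyp a b x) = u x)"

definition monotone_dirs :: "('a::euclidean_space \<Rightarrow> real) \<Rightarrow> 'a set" where
  "monotone_dirs u = {v. \<forall>x t. 0 \<le> t \<longrightarrow> u x \<le> u (x + t *\<^sub>R v)}"

lemma separableD:
  assumes "separable u" "a \<noteq> 0"
  shows "(\<forall>x. b < a \<bullet> x \<longrightarrow> u (refl_hyp a b x) \<le> u x) \<or> (\<forall>x. b < a \<bullet> x \<longrightarrow> u x \<le> u (refl_hyp a b x))"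
  using assms unfolding separable_def Let_def by auto

lemma reflection_invariantI_halfspace:
  assumes a: "a \<noteq> 0" and half: "\<And>x. b < a \<bullet> x \<Longrightarrow> u (refl_hyp a b x) = u x"
  shows "reflection_invariant u a b"
  unfolding reflection_invariant_def
proof
  fix x
  consider "b < a \<bullet> x" | "a \<bullet> x = b" | "a \<bullet> x < b" by linarith
  then show "u (refl_hyp a b x) = u x"
  proof cases
    case 3
    then have "u (refl_hyp a b (refl_hyp a b x)) = u (refl_hyp a b x)"
      using half inner_refl_hyp[OF a] by simp
    then show ?thesis by (simp add: refl_hyp_involutive[OF a])
  qed (simp_all add: half refl_hyp_fixpoint)
qed

lemma monotone_dirsI_reflections:
  assumes a: "a \<noteq> 0" and decr: "\<And>b x. b < a \<bullet> x \<Longrightarrow> u (refl_hyp a b x) \<le> u x"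
  shows "a \<in> monotone_dirs u"
  unfolding monotone_dirs_def
proof (intro CollectI allI impI)
  fix x and t :: real
  assume "0 \<le> t"
  show "u x \<le> u (x + t *\<^sub>R a)"
  proof (cases "t = 0")
    case False
    with \<open>0 \<le> t\<close> a have "a \<bullet> x + t * (a \<bullet> a) / 2 < a \<bullet> (x + t *\<^sub>R a)"
      by (simp add: inner_add_right)
    from decr[OF this] show ?thesis by (simp add: refl_hyp_shift[OF a])
  qed simp
qed

lemma continuous_on_refl_hyp_offset:
  assumes "continuous_on UNIV u" "a \<noteq> 0"
  shows "continuous_on UNIV (\<lambda>b. u (refl_hyp a b x))"
proof -
  have "continuous_on UNIV (\<lambda>b. refl_hyp a b x)"
    unfolding refl_hyp_def using assms(2) by (intro continuous_intros) auto
  then show ?thesis using continuous_on_compose2[OF assms(1)] by blast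
qed

text \<open>The offsets at which reflection decreases, respectively increases, \<open>u\<close> on the positive side
  form two closed sets covering \<open>\<real>\<close>; by connectedness either they meet, giving a symmetry
  hyperplane, or one of them is everything, giving monotonicity.\<close>
lemma separable_dichotomy:
  assumes cont: "continuous_on UNIV u" and sep: "separable u" and a: "a \<noteq> 0"
  shows "(\<exists>b. reflection_invariant u a b) \<or> a \<in> monotone_dirs u \<or> -a \<in> monotone_dirs u"
proof -
  define Dec where "Dec = {b. \<forall>x. b < a \<bullet> x \<longrightarrow> u (refl_hyp a b x) \<le> u x}"
  define Inc where "Inc = {b. \<forall>x. b < a \<bullet> x \<longrightarrow> u x \<le> u (refl_hyp a b x)}"
  have "Dec = (\<Inter>x. {b. a \<bullet> x \<le> b} \<union> {b. u (refl_hyp a b x) \<le> u x})"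
    unfolding Dec_def by (auto simp: not_less; metis not_le)
  moreover have "Inc = (\<Inter>x. {b. a \<bullet> x \<le> b} \<union> {b. u x \<le> u (refl_hyp a b x)})"
    unfolding Inc_def by (auto simp: not_less; metis not_le)
  ultimately have closed: "closed Dec" "closed Inc"
    by (auto intro!: closed_INT closed_Un closed_Collect_le continuous_intros
        continuous_on_refl_hyp_offset[OF cont a])
  have cover: "Dec \<union> Inc = UNIV"
    using separableD[OF sep a] unfolding Dec_def Inc_def by blast
  show ?thesis
  proof (cases "Dec \<inter> Inc = {}")
    case False
    then obtain b where "b \<in> Dec" "b \<in> Inc" by blast
    then have "reflection_invariant u a b"
      by (intro reflection_invariantI_halfspace[OF a]) (auto simp: Dec_def Inc_def intro: order_antisym)
    then show ?thesis by blast
  next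
    case True
    with closed cover connected_UNIV[where 'a=real] have "Inc = {} \<or> Dec = {}"
      unfolding connected_closed by blast
    then consider "Dec = UNIV" | "Inc = UNIV" using cover by blast
    then show ?thesis
    proof cases
      case 1
      then have "a \<in> monotone_dirs u"
        by (intro monotone_dirsI_reflections[OF a]) (auto simp: Dec_def)
      then show ?thesis by blast
    next
      case 2
      have "u (refl_hyp (-a) b y) \<le> u y" if "b < -a \<bullet> y" for b y
      proof -
        have "-b < a \<bullet> refl_hyp a (-b) y" using that inner_refl_hyp[OF a] by simp
        then have "u (refl_hyp a (-b) y) \<le> u (refl_hyp a (-b) (refl_hyp a (-b) y))"
          using 2 unfolding Inc_def by blast
        moreover have "refl_hyp (-a) b = refl_hyp a (-b)" by (simp add: refl_hyp_def fun_eq_iff algebra_simps flip: scaleR_add_left add_divide_distrib)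
        ultimately show ?thesis by (simp add: refl_hyp_involutive[OF a])
      qed
      then have "-a \<in> monotone_dirs u" using a by (intro monotone_dirsI_reflections) auto
      then show ?thesis by blast
    qed
  qed
qed

lemma monotone_dirs_add:
  assumes "v \<in> monotone_dirs u" "w \<in> monotone_dirs u"
  shows "v + w \<in> monotone_dirs u"
  unfolding monotone_dirs_def
proof (intro CollectI allI impI)
  fix x and t :: real
  assume "0 \<le> t"
  then have "u x \<le> u (x + t *\<^sub>R v)" "u (x + t *\<^sub>R v) \<le> u (x + t *\<^sub>R v + t *\<^sub>R w)"
    using assms unfolding monotone_dirs_def by blast+
  then show "u x \<le> u (x + t *\<^sub>R (v + w))" by (simp add: algebra_simps)
qed

lemma monotone_dirs_scaleR: "v \<in> monotone_dirs u \<Longrightarrow> 0 \<le> c \<Longrightarrow> c *\<^sub>R v \<in> monotone_dirs u"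
  unfolding monotone_dirs_def by simp

lemma closed_monotone_dirs:
  assumes cont: "continuous_on UNIV u"
  shows "closed (monotone_dirs u)"
proof -
  have "monotone_dirs u = (\<Inter>x. \<Inter>t\<in>{0..}. {v. u x \<le> u (x + t *\<^sub>R v)})"
    unfolding monotone_dirs_def by auto
  moreover have "closed {v. u x \<le> u (x + t *\<^sub>R v)}" for x t
  proof -
    have "continuous_on UNIV (\<lambda>v. u (x + t *\<^sub>R v))"
      by (rule continuous_on_compose2[OF cont]) (intro continuous_intros, simp)
    then show ?thesis by (intro closed_Collect_le continuous_intros)
  qed
  ultimately show ?thesis by (simp add: closed_INT)
qed

definition invariant_dirs :: "('a::euclidean_space \<Rightarrow> real) \<Rightarrow> 'a set" where
  "invariant_dirs u = {v. v \<in> monotone_dirs u \<and> -v \<in> monotone_dirs u}"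

lemma subspace_invariant_dirs: "subspace (invariant_dirs u)"
  unfolding subspace_def
proof (intro conjI ballI allI)
  show "0 \<in> invariant_dirs u" by (simp add: invariant_dirs_def monotone_dirs_def)
next
  fix v w assume "v \<in> invariant_dirs u" "w \<in> invariant_dirs u"
  then show "v + w \<in> invariant_dirs u"
    using monotone_dirs_add[of v u w] monotone_dirs_add[of "-v" u "-w"]
    by (simp add: invariant_dirs_def)
next
  fix c and v assume v: "v \<in> invariant_dirs u"
  show "c *\<^sub>R v \<in> invariant_dirs u"
  proof (cases "0 \<le> c")
    case True
    then show ?thesis using v monotone_dirs_scaleR[of v u c] monotone_dirs_scaleR[of "-v" u c]
      by (simp add: invariant_dirs_def)
  next
    case False
    then show ?thesis using v monotone_dirs_scaleR[of v u "-c"] monotone_dirs_scaleR[of "-v" u "-c"]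
      by (simp add: invariant_dirs_def)
  qed
qed

lemma invariant_dirsD:
  assumes "v \<in> invariant_dirs u"
  shows "u (x + v) = u x"
proof (rule order_antisym)
  have "\<forall>x t. 0 \<le> t \<longrightarrow> u x \<le> u (x + t *\<^sub>R v)" "\<forall>x t. 0 \<le> t \<longrightarrow> u x \<le> u (x + t *\<^sub>R -v)"
    using assms by (auto simp: invariant_dirs_def monotone_dirs_def)
  from this(1)[rule_format, of 1 x] this(2)[rule_format, of 1 "x + v"]
  show "u x \<le> u (x + v)" "u (x + v) \<le> u x" by simp_all
qed

lemma reflection_invariant_if_invariant_dir:
  assumes "a \<in> invariant_dirs u"
  shows "reflection_invariant u a b"
  unfolding reflection_invariant_def refl_hyp_def diff_conv_add_uminus scaleR_minus_left[symmetric]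
  using invariant_dirsD[OF subspace_scale[OF subspace_invariant_dirs assms]] by blast

lemma refl_hyp_monotone_dirs:
  assumes a: "a \<noteq> 0" and sym: "reflection_invariant u a b" and v: "v \<in> monotone_dirs u"
  shows "refl_hyp a 0 v \<in> monotone_dirs u"
  unfolding monotone_dirs_def
proof (intro CollectI allI impI)
  fix x and t :: real
  assume "0 \<le> t"
  have "u x = u (refl_hyp a b x)" using sym unfolding reflection_invariant_def by simp
  also have "\<dots> \<le> u (refl_hyp a b x + t *\<^sub>R v)" using v \<open>0 \<le> t\<close> unfolding monotone_dirs_def by blast
  also have "refl_hyp a b x + t *\<^sub>R v = refl_hyp a b (x + t *\<^sub>R refl_hyp a 0 v)"
    by (simp add: refl_hyp_add refl_hyp_scaleR refl_hyp_involutive[OF a])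
  also have "u \<dots> = u (x + t *\<^sub>R refl_hyp a 0 v)" using sym unfolding reflection_invariant_def by simp
  finally show "u x \<le> u (x + t *\<^sub>R refl_hyp a 0 v)" .
qed

section \<open>Rotating monotone directions\<close>

definition circle_dir :: "'a::real_normed_vector \<Rightarrow> 'a \<Rightarrow> real \<Rightarrow> 'a" where
  "circle_dir d w t = cos t *\<^sub>R d + sin t *\<^sub>R w"

lemma circle_dir_0 [simp]: "circle_dir d w 0 = d"
  and circle_dir_pi [simp]: "circle_dir d w pi = -d"
  by (simp_all add: circle_dir_def)

lemma continuous_on_circle_dir: "continuous_on UNIV (circle_dir d w)"
  unfolding circle_dir_def by (intro continuous_intros)

lemma inner_circle_dir:
  assumes "d \<bullet> d = 1" "w \<bullet> w = 1" "d \<bullet> w = 0"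
  shows "circle_dir d w t \<bullet> circle_dir d w p = cos (t - p)"
  using assms by (simp add: circle_dir_def inner_add_left inner_add_right inner_commute[of w d] cos_diff)

lemma circle_dir_nonzero:
  assumes "d \<bullet> d = 1" "w \<bullet> w = 1" "d \<bullet> w = 0"
  shows "circle_dir d w t \<noteq> 0"
  using inner_circle_dir[OF assms, of t t] by auto

lemma refl_hyp_circle_dir:
  assumes "d \<bullet> d = 1" "w \<bullet> w = 1" "d \<bullet> w = 0"
  shows "refl_hyp (circle_dir d w t) 0 (circle_dir d w p) = circle_dir d w (2 * t + pi - p)"
proof -
  define q where "q = t - p"
  have "2 * t + pi - p = t + q + pi" "p = t - q" unfolding q_def by simp_all
  moreover have "cos (t + q + pi) = cos (t - q) - 2 * cos q * cos t"
    "sin (t + q + pi) = sin (t - q) - 2 * cos q * sin t"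
    by (simp_all add: cos_add cos_diff sin_add sin_diff)
  ultimately show ?thesis
    by (simp add: refl_hyp_def inner_circle_dir[OF assms] q_def[symmetric])
       (simp add: circle_dir_def algebra_simps)
qed

lemma monotone_dirs_rotate:
  assumes orth: "d \<bullet> d = 1" "w \<bullet> w = 1" "d \<bullet> w = 0"
    and sym: "reflection_invariant u (circle_dir d w t) b" "reflection_invariant u (circle_dir d w (t + \<delta>)) b'"
    and p: "circle_dir d w p \<in> monotone_dirs u"
  shows "circle_dir d w (p + 2 * \<delta>) \<in> monotone_dirs u"
proof -
  have "circle_dir d w (2 * t + pi - p) \<in> monotone_dirs u"
    using refl_hyp_monotone_dirs[OF circle_dir_nonzero[OF orth] sym(1) p]
    by (simp add: refl_hyp_circle_dir[OF orth])
  from refl_hyp_monotone_dirs[OF circle_dir_nonzero[OF orth] sym(2) this]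
  have "circle_dir d w (2 * (t + \<delta>) + pi - (2 * t + pi - p)) \<in> monotone_dirs u"
    by (simp add: refl_hyp_circle_dir[OF orth])
  then show ?thesis by (simp add: algebra_simps)
qed

lemma symmetric_circle_arc:
  assumes cont: "continuous_on UNIV u" and sep: "separable u"
    and orth: "d \<bullet> d = 1" "w \<bullet> w = 1" "d \<bullet> w = 0"
    and d: "d \<in> monotone_dirs u" "-d \<notin> monotone_dirs u"
    and no_inv: "\<And>t. 0 < t \<Longrightarrow> t < pi \<Longrightarrow> circle_dir d w t \<notin> invariant_dirs u"
  obtains t0 \<epsilon> where "\<epsilon> > 0" "\<And>t. dist t t0 < \<epsilon> \<Longrightarrow> \<exists>b. reflection_invariant u (circle_dir d w t) b"
proof -
  define A where "A = circle_dir d w -` monotone_dirs u"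
  define B where "B = (\<lambda>t. - circle_dir d w t) -` monotone_dirs u"
  have closed: "closed A" "closed B" unfolding A_def B_def
    by (intro closed_vimage closed_monotone_dirs[OF cont] continuous_intros continuous_on_circle_dir)+
  have disjoint: "A \<inter> B \<inter> {0..pi} = {}"
  proof -
    have "t \<notin> A \<inter> B" if "0 \<le> t" "t \<le> pi" for t
    proof (cases "t = 0 \<or> t = pi")
      case True
      then show ?thesis using d(2) unfolding A_def B_def by auto
    next
      case False
      then show ?thesis using that no_inv[of t] unfolding A_def B_def invariant_dirs_def by auto
    qed
    then show ?thesis by auto
  qed
  have "0 \<in> A \<inter> {0..pi}" "pi \<in> B \<inter> {0..pi}" using d(1) by (simp_all add: A_def B_def)
  then have "\<not> {0..pi} \<subseteq> A \<union> B"
    using connected_closed[of "{0..pi::real}"] connected_Icc closed disjoint by blast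
  then obtain t0 where "t0 \<notin> A \<union> B" by blast
  moreover have "open (- (A \<union> B))" using closed by auto
  ultimately obtain \<epsilon> where \<epsilon>: "\<epsilon> > 0" "ball t0 \<epsilon> \<subseteq> - (A \<union> B)"
    using open_contains_ball by blast
  have "\<exists>b. reflection_invariant u (circle_dir d w t) b" if "dist t t0 < \<epsilon>" for t
  proof -
    have "t \<notin> A \<union> B" using \<epsilon>(2) that by (auto simp: dist_commute)
    then have "circle_dir d w t \<notin> monotone_dirs u" "- circle_dir d w t \<notin> monotone_dirs u"
      unfolding A_def B_def by auto
    then show ?thesis using separable_dichotomy[OF cont sep circle_dir_nonzero[OF orth]] by blast
  qed
  with \<epsilon>(1) show ?thesis using that by blast
qed

text \<open>Otherwise the symmetries near some direction of the half circle rotate \<open>d\<close> in small steps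
  into \<open>-d\<close>.\<close>
lemma invariant_dir_on_half_circle:
  assumes cont: "continuous_on UNIV u" and sep: "separable u"
    and orth: "d \<bullet> d = 1" "w \<bullet> w = 1" "d \<bullet> w = 0"
    and d: "d \<in> monotone_dirs u" "-d \<notin> monotone_dirs u"
  shows "\<exists>t. 0 < t \<and> t < pi \<and> circle_dir d w t \<in> invariant_dirs u"
proof (rule ccontr)
  assume "\<not> ?thesis"
  then have "\<And>t. 0 < t \<Longrightarrow> t < pi \<Longrightarrow> circle_dir d w t \<notin> invariant_dirs u" by blast
  then obtain t0 \<epsilon> where \<epsilon>: "\<epsilon> > 0"
    and sym: "\<And>t. dist t t0 < \<epsilon> \<Longrightarrow> \<exists>b. reflection_invariant u (circle_dir d w t) b"
    using symmetric_circle_arc[OF cont sep orth d] by metis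
  obtain m :: nat where m: "pi / (2 * \<epsilon>) < real m" using reals_Archimedean2 by blast
  have "0 < pi / (2 * \<epsilon>)" using \<epsilon> by simp
  with m have m0: "real m > 0" by linarith
  define \<delta> where "\<delta> = pi / (2 * real m)"
  have "\<delta> < \<epsilon>" unfolding \<delta>_def using m m0 \<epsilon> by (simp add: divide_less_eq algebra_simps)
  moreover have "0 < \<delta>" unfolding \<delta>_def using m0 by simp
  ultimately obtain b b' where b: "reflection_invariant u (circle_dir d w t0) b"
    "reflection_invariant u (circle_dir d w (t0 + \<delta>)) b'"
    using sym[of t0] sym[of "t0 + \<delta>"] \<epsilon> by (auto simp: dist_real_def)
  have "circle_dir d w (real k * (2 * \<delta>)) \<in> monotone_dirs u" for k
  proof (induction k)
    case (Suc k)
    from monotone_dirs_rotate[OF orth b Suc] show ?case by (simp add: algebra_simps)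
  qed (simp add: d)
  from this[of m] m0 d(2) show False by (simp add: \<delta>_def)
qed

lemma invariant_dir_orthogonal_shift:
  assumes cont: "continuous_on UNIV u" and sep: "separable u"
    and d: "d \<in> monotone_dirs u" "-d \<notin> monotone_dirs u" "d \<bullet> d = 1" and w: "w \<bullet> d = 0"
  shows "\<exists>c. w + c *\<^sub>R d \<in> invariant_dirs u"
proof (cases "w = 0")
  case True
  then show ?thesis using subspace_0[OF subspace_invariant_dirs] by (intro exI[of _ 0]) simp
next
  case False
  define v where "v = (1 / norm w) *\<^sub>R w"
  have "v \<bullet> v = 1" "d \<bullet> v = 0" using False w
    by (simp_all add: v_def inner_commute dot_square_norm power2_eq_square)
  then obtain t where t: "0 < t" "t < pi" "circle_dir d v t \<in> invariant_dirs u"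
    using invariant_dir_on_half_circle[OF cont sep d(3) _ _ d(1,2)] by blast
  then have "sin t > 0" by (simp add: sin_gt_zero)
  have "(norm w / sin t) *\<^sub>R circle_dir d v t \<in> invariant_dirs u"
    using subspace_scale[OF subspace_invariant_dirs t(3)] .
  moreover have "(norm w / sin t) *\<^sub>R circle_dir d v t = w + (norm w * cos t / sin t) *\<^sub>R d"
    using \<open>sin t > 0\<close> False by (simp add: circle_dir_def v_def scaleR_add_right)
  ultimately show ?thesis by auto
qed

section \<open>Dependence on a single linear form\<close>

lemma subspace_complement_coefficient:
  fixes d :: "'a::euclidean_space"
  assumes S: "subspace S" and d: "d \<notin> S" and span: "\<And>x. \<exists>c. x - c *\<^sub>R d \<in> S"
  shows "\<exists>n. n \<noteq> 0 \<and> (\<forall>x. x - (n \<bullet> x) *\<^sub>R d \<in> S)"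
proof -
  obtain \<phi> where \<phi>: "\<And>i. i - \<phi> i *\<^sub>R d \<in> S" using span by metis
  define n where "n = (\<Sum>i\<in>Basis. \<phi> i *\<^sub>R i)"
  have n: "x - (n \<bullet> x) *\<^sub>R d \<in> S" for x
  proof -
    have "n \<bullet> x = (\<Sum>i\<in>Basis. (x \<bullet> i) * \<phi> i)"
      unfolding n_def by (simp add: inner_sum_left inner_commute[of x] mult.commute)
    then have "x - (n \<bullet> x) *\<^sub>R d = (\<Sum>i\<in>Basis. (x \<bullet> i) *\<^sub>R (i - \<phi> i *\<^sub>R d))"
      by (simp add: scaleR_diff_right sum_subtractf euclidean_representation scaleR_sum_left)
    also have "\<dots> \<in> S" by (intro subspace_sum[OF S] subspace_scale[OF S] \<phi>)
    finally show ?thesis .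
  qed
  moreover have "n \<noteq> 0" using n[of d] d by auto
  ultimately show ?thesis by blast
qed

definition constant_on_hyperplanes :: "('a::euclidean_space \<Rightarrow> real) \<Rightarrow> 'a \<Rightarrow> bool" where
  "constant_on_hyperplanes u n \<longleftrightarrow> (\<forall>x y. n \<bullet> x = n \<bullet> y \<longrightarrow> u x = u y)"

text \<open>Together with a monotone, non-invariant unit direction \<open>d\<close> the invariant directions span
  the whole space, so they form a hyperplane.\<close>
lemma constant_on_hyperplanes_if_not_reflection_invariant:
  assumes cont: "continuous_on UNIV u" and sep: "separable u"
    and a: "a \<noteq> 0" and not_sym: "\<nexists>b. reflection_invariant u a b"
  shows "\<exists>n. n \<noteq> 0 \<and> constant_on_hyperplanes u n"
proof -
  have inv: "subspace (invariant_dirs u)" by (rule subspace_invariant_dirs)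
  have "a \<notin> invariant_dirs u" "-a \<notin> invariant_dirs u"
    using not_sym reflection_invariant_if_invariant_dir subspace_neg[OF inv, of "-a"] by auto
  then obtain a' where a': "a' \<in> monotone_dirs u" "a' \<notin> invariant_dirs u"
    using separable_dichotomy[OF cont sep a] not_sym by blast
  define d where "d = (1 / norm a') *\<^sub>R a'"
  have "a' \<noteq> 0" using a' subspace_0[OF inv] by auto
  then have a'_d: "a' = norm a' *\<^sub>R d" and dd: "d \<bullet> d = 1"
    by (simp_all add: d_def inner_commute dot_square_norm power2_eq_square)
  have d_mono: "d \<in> monotone_dirs u" unfolding d_def by (rule monotone_dirs_scaleR[OF a'(1)]) simp
  have d_not_inv: "d \<notin> invariant_dirs u" using a' a'_d subspace_scale[OF inv] by metis
  then have "-d \<notin> monotone_dirs u" using d_mono by (simp add: invariant_dirs_def)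
  have "\<exists>c. x - c *\<^sub>R d \<in> invariant_dirs u" for x
  proof -
    have "(x - (x \<bullet> d) *\<^sub>R d) \<bullet> d = 0" using dd by (simp add: inner_diff_left)
    then obtain c where "x - (x \<bullet> d) *\<^sub>R d + c *\<^sub>R d \<in> invariant_dirs u"
      using invariant_dir_orthogonal_shift[OF cont sep d_mono \<open>-d \<notin> _\<close> dd] by blast
    then show ?thesis by (intro exI[of _ "x \<bullet> d - c"]) (simp add: algebra_simps)
  qed
  then obtain n where n: "n \<noteq> 0" "\<And>x. x - (n \<bullet> x) *\<^sub>R d \<in> invariant_dirs u"
    using subspace_complement_coefficient[OF inv d_not_inv] by blast
  have "u x = u y" if "n \<bullet> x = n \<bullet> y" for x y
  proof -
    have "x - y \<in> invariant_dirs u"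
      using subspace_diff[OF inv n(2)[of x] n(2)[of y]] that by simp
    from invariant_dirsD[OF this, of y] show ?thesis by simp
  qed
  with n(1) show ?thesis unfolding constant_on_hyperplanes_def by blast
qed

section \<open>Radial symmetry\<close>

lemma periodic_add_multiple:
  fixes u :: "'a::real_vector \<Rightarrow> real"
  assumes per: "\<And>x. u (x + v) = u x"
  shows "u (x + real m *\<^sub>R v) = u x"
proof (induction m arbitrary: x)
  case (Suc m)
  have "x + real (Suc m) *\<^sub>R v = (x + real m *\<^sub>R v) + v" by (simp add: scaleR_add_left)
  with per Suc show ?case by metis
qed simp

text \<open>Translating the reflection of a point by a large multiple of the period brings it back into
  the half-space, where separability compares it with the original point in the opposite
  direction.\<close>
lemma reflection_invariant_if_periodic:
  assumes sep: "separable u" and a: "a \<noteq> 0" and \<kappa>: "\<kappa> \<noteq> 0"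
    and per: "\<And>x. u (x + \<kappa> *\<^sub>R a) = u x"
  shows "reflection_invariant u a b"
proof (rule reflection_invariantI_halfspace[OF a])
  define p where "p = \<bar>\<kappa>\<bar> *\<^sub>R a"
  have per_p: "u (y + p) = u y" for y
    using per[of y] per[of "y + p"] by (cases "\<kappa> > 0") (simp_all add: p_def)
  have "a \<bullet> p > 0" using a \<kappa> by (simp add: p_def)
  fix x assume x: "b < a \<bullet> x"
  define y where "y = refl_hyp a b x"
  obtain m :: nat where "(b - a \<bullet> y) / (a \<bullet> p) < real m" using reals_Archimedean2 by blast
  then have z: "b < a \<bullet> (y + real m *\<^sub>R p)"
    using \<open>a \<bullet> p > 0\<close> by (simp add: inner_add_right pos_divide_less_eq algebra_simps)
  have "refl_hyp a b (y + real m *\<^sub>R p) = x - real m *\<^sub>R p"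
    using refl_hyp_normal[OF a, of "real m * \<bar>\<kappa>\<bar>"]
    by (simp add: y_def p_def refl_hyp_add refl_hyp_involutive[OF a])
  moreover have "u (y + real m *\<^sub>R p) = u y" "u (x - real m *\<^sub>R p) = u x"
    using periodic_add_multiple[where u=u and v=p, OF per_p, of _ m] by (metis diff_add_cancel)+
  ultimately have "u (refl_hyp a b (y + real m *\<^sub>R p)) = u x" "u (y + real m *\<^sub>R p) = u (refl_hyp a b x)"
    by (simp_all add: y_def)
  with separableD[OF sep a, of b] x z show "u (refl_hyp a b x) = u x"
    by (metis order_antisym)
qed

lemma point_symmetric_if_coordinate_symmetric:
  fixes u :: "'a::euclidean_space \<Rightarrow> real"
  assumes sym: "\<And>i. i \<in> Basis \<Longrightarrow> reflection_invariant u i (c i)"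
  shows "u (2 *\<^sub>R (\<Sum>i\<in>Basis. c i *\<^sub>R i) - x) = u x"
proof -
  have "u (x - 2 *\<^sub>R (\<Sum>i\<in>F. (x \<bullet> i - c i) *\<^sub>R i)) = u x" if "F \<subseteq> Basis" for F
    using finite_subset[OF that finite_Basis] that
  proof (induction F rule: finite_induct)
    case (insert j F)
    define y where "y = x - 2 *\<^sub>R (\<Sum>i\<in>F. (x \<bullet> i - c i) *\<^sub>R i)"
    have j: "j \<in> Basis" and F: "F \<subseteq> Basis" using insert.prems by auto
    have "j \<bullet> (\<Sum>i\<in>F. (x \<bullet> i - c i) *\<^sub>R i) = 0"
      using F j insert.hyps(2) by (auto simp: inner_sum_right inner_Basis intro!: sum.neutral)
    then have "refl_hyp j (c j) y = x - 2 *\<^sub>R (\<Sum>i\<in>insert j F. (x \<bullet> i - c i) *\<^sub>R i)"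
      using insert.hyps j
      by (simp add: refl_hyp_def y_def inner_diff_right inner_commute[of j x] algebra_simps)
    moreover have "u (refl_hyp j (c j) y) = u y" using sym[OF j] by (simp add: reflection_invariant_def)
    ultimately show ?case using insert.IH[OF F] by (simp add: y_def)
  qed simp
  moreover have "(\<Sum>i\<in>Basis. (x \<bullet> i - c i) *\<^sub>R i) = x - (\<Sum>i\<in>Basis. c i *\<^sub>R i)"
    by (simp add: scaleR_diff_left sum_subtractf euclidean_representation)
  moreover have "x - 2 *\<^sub>R (x - z) = 2 *\<^sub>R z - x" for z :: 'a by (simp add: algebra_simps scaleR_2)
  ultimately show ?thesis by (metis order_refl)
qed

text \<open>Conjugating by the point reflection gives a second symmetry hyperplane orthogonal to \<open>a\<close>;
  two distinct ones would make \<open>u\<close> periodic along \<open>a\<close>.\<close>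
lemma reflection_invariant_through_center:
  assumes sep: "separable u" and a: "a \<noteq> 0"
    and center: "\<And>x. u (2 *\<^sub>R c - x) = u x" and sym: "reflection_invariant u a b"
  shows "reflection_invariant u a (a \<bullet> c)"
proof -
  define b' where "b' = 2 * (a \<bullet> c) - b"
  have "refl_hyp a b' x = 2 *\<^sub>R c - refl_hyp a b (2 *\<^sub>R c - x)" for x
  proof -
    have "2 * (a \<bullet> x - b') / (a \<bullet> a) = - (2 * (a \<bullet> (2 *\<^sub>R c - x) - b) / (a \<bullet> a))"
      unfolding b'_def using a by (simp add: inner_diff_right field_simps)
    then show ?thesis unfolding refl_hyp_def by (simp add: algebra_simps)
  qed
  then have sym': "reflection_invariant u a b'"
    using sym center unfolding reflection_invariant_def by metis
  show ?thesis
  proof (cases "b = b'")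
    case True
    then show ?thesis using sym by (simp add: b'_def)
  next
    case False
    with a have "2 * (b' - b) / (a \<bullet> a) \<noteq> 0" by simp
    moreover have "u (x + (2 * (b' - b) / (a \<bullet> a)) *\<^sub>R a) = u x" for x
      using sym sym' refl_hyp_refl_hyp[OF a, of b' b x] unfolding reflection_invariant_def by metis
    ultimately show ?thesis using reflection_invariant_if_periodic[OF sep a] by blast
  qed
qed

lemma refl_hyp_equidistant:
  assumes "norm (x - c) = norm (y - c)" "x \<noteq> y"
  shows "refl_hyp (x - y) ((x - y) \<bullet> c) x = y"
proof -
  have "(x - c) \<bullet> (x - c) = (y - c) \<bullet> (y - c)" using assms(1) by (simp add: dot_square_norm)
  then have "2 * ((x - y) \<bullet> x - (x - y) \<bullet> c) = (x - y) \<bullet> (x - y)"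
    by (simp add: algebra_simps inner_commute)
  moreover have "(x - y) \<bullet> (x - y) \<noteq> 0" using assms(2) by simp
  ultimately show ?thesis by (simp add: refl_hyp_def)
qed

lemma radially_symmetric_if_reflection_invariant:
  fixes u :: "'a::euclidean_space \<Rightarrow> real"
  assumes sep: "separable u" and sym: "\<And>a. a \<noteq> 0 \<Longrightarrow> \<exists>b. reflection_invariant u a b"
  shows "\<exists>c. radially_symmetric u c"
proof -
  obtain b where "\<And>i. i \<in> Basis \<Longrightarrow> reflection_invariant u i (b i)"
    using sym nonzero_Basis by metis
  then obtain c where center: "\<And>x. u (2 *\<^sub>R c - x) = u x"
    using point_symmetric_if_coordinate_symmetric by blast
  have "u x = u y" if "norm (x - c) = norm (y - c)" for x y
  proof (cases "x = y")
    case False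
    then obtain b where "reflection_invariant u (x - y) b" using sym by fastforce
    then have "reflection_invariant u (x - y) ((x - y) \<bullet> c)"
      using reflection_invariant_through_center[OF sep _ center] False by simp
    then show ?thesis
      using refl_hyp_equidistant[OF that False] unfolding reflection_invariant_def by metis
  qed simp
  obtain i :: 'a where "i \<in> Basis" using nonempty_Basis by blast
  then have "u x = u (c + norm (x - c) *\<^sub>R i)" for x by (intro \<open>\<And>x y. _ \<Longrightarrow> u x = u y\<close>) simp
  then have "radially_symmetric u c"
    unfolding radially_symmetric_def by (intro exI[of _ "\<lambda>r. u (c + r *\<^sub>R i)"]) blast
  then show ?thesis ..
qed

lemma constant_on_hyperplanesD: "constant_on_hyperplanes u n \<Longrightarrow> n \<bullet> x = n \<bullet> y \<Longrightarrow> u x = u y"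
  unfolding constant_on_hyperplanes_def by blast

section \<open>Even profiles are constant\<close>

lemma constant_on_hyperplanes_uminus [simp]:
  "constant_on_hyperplanes u (-n) \<longleftrightarrow> constant_on_hyperplanes u n"
  by (simp add: constant_on_hyperplanes_def)

text \<open>A reflection in a hyperplane oblique to \<open>n\<close> maps a suitable point of every level set of \<open>n \<bullet> x\<close>
  onto every other level set.\<close>
lemma constant_if_oblique_reflection_invariant:
  assumes n: "n \<noteq> 0" and const: "constant_on_hyperplanes u n"
    and w: "w \<noteq> 0" "w \<bullet> n = 0" and sym: "reflection_invariant u (n + w) b"
  shows "u x = u y"
proof -
  define e where "e = n + w"
  have nn: "n \<bullet> n > 0" and ww: "w \<bullet> w > 0" using n w by simp_all
  have nw: "n \<bullet> w = 0" using w(2) by (simp add: inner_commute)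
  have ne: "n \<bullet> e = n \<bullet> n" and ee: "e \<bullet> e = n \<bullet> n + w \<bullet> w"
    using w(2) nw by (simp_all add: e_def inner_add_left inner_add_right)
  define \<tau> where "\<tau> = ((n \<bullet> x - n \<bullet> y) * (e \<bullet> e) / (2 * (n \<bullet> n)) - n \<bullet> x + b) / (w \<bullet> w)"
  define z where "z = (n \<bullet> x / (n \<bullet> n)) *\<^sub>R n + \<tau> *\<^sub>R w"
  have nz: "n \<bullet> z = n \<bullet> x" and ez: "e \<bullet> z = n \<bullet> x + \<tau> * (w \<bullet> w)"
    using w(2) nw nn by (simp_all add: z_def e_def inner_add_left inner_add_right)
  have "e \<bullet> z - b = (n \<bullet> x - n \<bullet> y) * (e \<bullet> e) / (2 * (n \<bullet> n))"
    unfolding ez \<tau>_def using ww by simp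
  moreover have "e \<bullet> e > 0" using nn ww ee by linarith
  moreover have "n \<bullet> refl_hyp e b z = n \<bullet> x - 2 * (e \<bullet> z - b) * (n \<bullet> n) / (e \<bullet> e)"
    by (simp add: refl_hyp_def inner_diff_right nz ne)
  ultimately have nr: "n \<bullet> refl_hyp e b z = n \<bullet> y" using nn by simp
  have "u x = u z" by (rule constant_on_hyperplanesD[OF const]) (simp add: nz)
  also have "\<dots> = u (refl_hyp e b z)" using sym by (simp add: reflection_invariant_def e_def)
  also have "\<dots> = u y" using constant_on_hyperplanesD[OF const nr] .
  finally show ?thesis .
qed

lemma monotone_along_normal:
  assumes const: "constant_on_hyperplanes u n" and e: "e \<in> monotone_dirs u" "n \<bullet> e > 0"
    and xy: "n \<bullet> x \<le> n \<bullet> y"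
  shows "u x \<le> u y"
proof -
  define t where "t = (n \<bullet> y - n \<bullet> x) / (n \<bullet> e)"
  have "0 \<le> t" using xy e(2) by (simp add: t_def)
  then have "u x \<le> u (x + t *\<^sub>R e)" using e(1) by (simp add: monotone_dirs_def)
  also have "u (x + t *\<^sub>R e) = u y"
    using e(2) by (intro constant_on_hyperplanesD[OF const]) (simp add: inner_add_right t_def)
  finally show ?thesis .
qed

lemma constant_if_monotone_and_even:
  fixes u :: "'a::euclidean_space \<Rightarrow> real"
  assumes n: "n \<noteq> 0" and mono: "\<And>x y. n \<bullet> x \<le> n \<bullet> y \<Longrightarrow> u x \<le> u y"
    and even: "\<And>x y. n \<bullet> x + n \<bullet> y = 2 * s \<Longrightarrow> u x = u y"
  shows "u x = u y"
proof -
  define p where "p = (\<lambda>r. (r / (n \<bullet> n)) *\<^sub>R n)"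
  have np: "n \<bullet> p r = r" for r using n by (simp add: p_def)
  define R where "R = \<bar>n \<bullet> x - s\<bar> + \<bar>n \<bullet> y - s\<bar>"
  have "u (p (s - R)) = u (p (s + R))" by (rule even) (simp add: np)
  moreover have "u (p (s - R)) \<le> u x" "u x \<le> u (p (s + R))" "u (p (s - R)) \<le> u y" "u y \<le> u (p (s + R))"
    by (auto intro!: mono simp: np R_def)
  ultimately show ?thesis by linarith
qed

text \<open>Separability is applied in a direction \<open>n + w\<close> oblique to \<open>n\<close>; this is where
  \<open>DIM('a) \<ge> 2\<close> is needed.\<close>
lemma constant_if_even_along_normal:
  fixes u :: "'a::euclidean_space \<Rightarrow> real"
  assumes dim: "DIM('a) \<ge> 2" and cont: "continuous_on UNIV u" and sep: "separable u"
    and n: "n \<noteq> 0" and const: "constant_on_hyperplanes u n"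
    and even: "\<And>x y. n \<bullet> x + n \<bullet> y = 2 * s \<Longrightarrow> u x = u y"
  shows "u x = u y"
proof -
  obtain w where w: "w \<noteq> 0" "w \<bullet> n = 0"
    using orthogonal_to_vector_exists[OF dim, of n] by (auto simp: orthogonal_def inner_commute)
  have ne: "n \<bullet> (n + w) > 0" using n w by (simp add: inner_add_right inner_commute)
  then have "n + w \<noteq> 0" by auto
  from separable_dichotomy[OF cont sep this] consider
    b where "reflection_invariant u (n + w) b" | "n + w \<in> monotone_dirs u" | "-(n + w) \<in> monotone_dirs u"
    by blast
  then show ?thesis
  proof cases
    case 1
    then show ?thesis using constant_if_oblique_reflection_invariant[OF n const w] by blast
  next
    case 2
    show ?thesis
      by (rule constant_if_monotone_and_even[OF n monotone_along_normal[OF const 2 ne] even])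
  next
    case 3
    have "constant_on_hyperplanes u (-n)" "(-n) \<bullet> (-(n + w)) > 0"
      using const ne by (simp_all only: constant_on_hyperplanes_uminus inner_minus_left inner_minus_right minus_minus)
    note mono = monotone_along_normal[OF this(1) 3 this(2)]
    have "(-n) \<bullet> x + (-n) \<bullet> y = 2 * (-s) \<Longrightarrow> u x = u y" for x y using even[of x y] by simp
    from constant_if_monotone_and_even[of "-n" u, OF _ mono this] n show ?thesis by simp
  qed
qed

section \<open>Symmetry axes\<close>

lemma start_in_line_through: "x \<in> line_through x d"
  unfolding line_through_def by (auto intro!: exI[of _ 0])

lemma line_through_direction:
  assumes "line_through p a = line_through q b"
  shows "\<exists>l. b = l *\<^sub>R a"
proof -
  have "q \<in> line_through q b" "q + b \<in> line_through q b" unfolding line_through_def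
    by (auto intro!: exI[of _ 0] exI[of _ 1])
  then have "q \<in> line_through p a" "q + b \<in> line_through p a" using assms by auto
  then obtain t1 t2 where "q = p + t1 *\<^sub>R a" "q + b = p + t2 *\<^sub>R a"
    unfolding line_through_def by blast
  then have "b = (t2 - t1) *\<^sub>R a" by (simp add: algebra_simps)
  then show ?thesis by blast
qed

lemma line_through_start:
  assumes "y \<in> line_through x d"
  shows "line_through y d = line_through x d"
proof -
  obtain t0 where y: "y = x + t0 *\<^sub>R d" using assms unfolding line_through_def by auto
  show ?thesis unfolding line_through_def y
  proof safe
    fix t show "\<exists>s. x + t0 *\<^sub>R d + t *\<^sub>R d = x + s *\<^sub>R d \<and> True"
      by (intro exI[of _ "t0 + t"]) (simp add: algebra_simps)
  next
    fix t show "\<exists>s. x + t *\<^sub>R d = x + t0 *\<^sub>R d + s *\<^sub>R d \<and> True"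
      by (intro exI[of _ "t - t0"]) (simp add: algebra_simps)
  qed
qed

lemma line_through_scaleR:
  assumes "l \<noteq> 0"
  shows "line_through p (l *\<^sub>R n) = line_through p n"
  unfolding line_through_def
proof safe
  fix t show "\<exists>s. p + t *\<^sub>R l *\<^sub>R n = p + s *\<^sub>R n \<and> True" by (intro exI[of _ "t * l"]) simp
next
  fix t show "\<exists>s. p + t *\<^sub>R n = p + s *\<^sub>R l *\<^sub>R n \<and> True"
    using assms by (intro exI[of _ "t / l"]) simp
qed

lemma symmetry_axis_line_through:
  assumes n: "n \<noteq> 0" and const: "constant_on_hyperplanes u n"
  shows "symmetry_axis u (line_through p n)"
  unfolding symmetry_axis_def
proof (intro conjI allI impI)
  show "is_line (line_through p n)" unfolding is_line_def using n by blast
  fix \<alpha> :: real and V z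
  assume "orth_hyperplane (line_through p n) V" and z: "z \<in> line_through p n \<inter> V"
  then obtain q d c where d: "d \<noteq> 0" "line_through p n = line_through q d" "V = {x. d \<bullet> x = c}"
    unfolding orth_hyperplane_def by blast
  obtain l where l: "d = l *\<^sub>R n" using line_through_direction[OF d(2)] by blast
  have "u x = u z" if "x \<in> sphere z \<alpha> \<inter> V" for x
  proof (rule constant_on_hyperplanesD[OF const])
    have "d \<bullet> x = d \<bullet> z" using that z d(3) by auto
    then show "n \<bullet> x = n \<bullet> z" using l d(1) by simp
  qed
  then show "\<exists>c. \<forall>x\<in>sphere z \<alpha> \<inter> V. u x = c" by blast
qed

text \<open>Along the component \<open>v\<close> of \<open>n\<close> orthogonal to the axis, \<open>p + a v\<close> and \<open>p - a v\<close> lie on one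
  sphere of one orthogonal hyperplane, so \<open>u\<close> takes the same value there.\<close>
lemma even_along_normal_if_oblique_axis:
  assumes n: "n \<noteq> 0" and const: "constant_on_hyperplanes u n" and d: "d \<noteq> 0" "\<nexists>l. d = l *\<^sub>R n"
    and axis: "symmetry_axis u (line_through p d)"
    and yz: "n \<bullet> y + n \<bullet> z = 2 * (n \<bullet> p)"
  shows "u y = u z"
proof -
  define c where "c = (n \<bullet> d) / (d \<bullet> d)"
  define v where "v = n - c *\<^sub>R d"
  have dv: "d \<bullet> v = 0" using d(1) by (simp add: v_def c_def inner_diff_right inner_commute)
  have nv: "n \<bullet> v = v \<bullet> v"
    using dv by (simp add: v_def inner_diff_left inner_diff_right inner_commute)
  have "v \<noteq> 0"
  proof
    assume "v = 0"
    then have nd: "n = c *\<^sub>R d" by (simp add: v_def)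
    with n have "c \<noteq> 0" by auto
    with nd have "d = (1 / c) *\<^sub>R n" by simp
    with d(2) show False by blast
  qed
  then have vv: "v \<bullet> v > 0" by simp
  define V where "V = {x. d \<bullet> x = d \<bullet> p}"
  have V: "orth_hyperplane (line_through p d) V" "p \<in> line_through p d \<inter> V"
    using d(1) start_in_line_through by (auto simp: orth_hyperplane_def V_def)
  have pm: "u (p + a *\<^sub>R v) = u (p - a *\<^sub>R v)" for a
  proof (cases "a = 0")
    case False
    then have "\<bar>a\<bar> * norm v > 0" using \<open>v \<noteq> 0\<close> by simp
    then obtain c where c: "\<forall>x\<in>sphere p (\<bar>a\<bar> * norm v) \<inter> V. u x = c"
      using axis V unfolding symmetry_axis_def by blast
    have "p + a *\<^sub>R v \<in> sphere p (\<bar>a\<bar> * norm v) \<inter> V" "p - a *\<^sub>R v \<in> sphere p (\<bar>a\<bar> * norm v) \<inter> V"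
      using dv by (auto simp: V_def dist_norm inner_add_right inner_diff_right)
    with c show ?thesis by simp
  qed simp
  define a where "a = (n \<bullet> y - n \<bullet> p) / (v \<bullet> v)"
  have "n \<bullet> (p + a *\<^sub>R v) = n \<bullet> y" "n \<bullet> (p - a *\<^sub>R v) = n \<bullet> z"
    using vv yz by (simp_all add: inner_add_right inner_diff_right nv a_def)
  then have "u y = u (p + a *\<^sub>R v)" "u (p - a *\<^sub>R v) = u z"
    using constant_on_hyperplanesD[OF const] by metis+
  with pm[of a] show ?thesis by simp
qed

lemma symmetry_axis_eq_line_through:
  fixes u :: "'a::euclidean_space \<Rightarrow> real"
  assumes dim: "DIM('a) \<ge> 2" and cont: "continuous_on UNIV u" and sep: "separable u"
    and n: "n \<noteq> 0" and const: "constant_on_hyperplanes u n" and nonconst: "u x0 \<noteq> u y0"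
    and axis: "symmetry_axis u L" and x: "x \<in> L"
  shows "L = line_through x n"
proof -
  obtain p d where d: "d \<noteq> 0" "L = line_through p d"
    using axis unfolding symmetry_axis_def is_line_def by blast
  have "\<exists>l. d = l *\<^sub>R n"
  proof (rule ccontr)
    assume "\<nexists>l. d = l *\<^sub>R n"
    with axis d have "n \<bullet> y + n \<bullet> z = 2 * (n \<bullet> p) \<Longrightarrow> u y = u z" for y z
      using even_along_normal_if_oblique_axis[OF n const d(1)] by blast
    with nonconst show False using constant_if_even_along_normal[OF dim cont sep n const] by blast
  qed
  then obtain l where "d = l *\<^sub>R n" "l \<noteq> 0" using d(1) by auto
  then have "L = line_through p n" using d(2) by (simp add: line_through_scaleR)
  with x show ?thesis using line_through_start by blast
qed

theorem lemma3p1: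
  fixes u :: "'a::euclidean_space \<Rightarrow> real"
  assumes "DIM('a) \<ge> 2"
    and "continuous_on UNIV u"
    and "\<forall>x. u x > 0"
    and "separable u"
    and "\<not> (\<exists>xs. radially_symmetric u xs)"
  shows "(\<forall>x. \<exists>!L. symmetry_axis u L \<and> x \<in> L)
    \<and> (\<forall>x y. y \<in> axis_at u x \<longrightarrow> axis_at u y = axis_at u x)
    \<and> (\<forall>x y. axis_at u x = axis_at u y \<or> parallel_lines (axis_at u x) (axis_at u y))"
proof -
  obtain a where "a \<noteq> 0" "\<nexists>b. reflection_invariant u a b"
    using radially_symmetric_if_reflection_invariant[OF assms(4)] assms(5) by blast
  then obtain n where n: "n \<noteq> 0" "constant_on_hyperplanes u n"
    using constant_on_hyperplanes_if_not_reflection_invariant[OF assms(2,4)] by blast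
  have "\<exists>x0 y0. u x0 \<noteq> u y0"
  proof (rule ccontr)
    assume "\<nexists>x0 y0. u x0 \<noteq> u y0"
    then have "radially_symmetric u 0" unfolding radially_symmetric_def by blast
    with assms(5) show False by blast
  qed
  then obtain x0 y0 where "u x0 \<noteq> u y0" by blast
  then have axes: "symmetry_axis u L \<and> x \<in> L \<longleftrightarrow> L = line_through x n" for x L
    using symmetry_axis_eq_line_through[OF assms(1,2,4) n] symmetry_axis_line_through[OF n]
      start_in_line_through by blast
  then have axis_at: "axis_at u x = line_through x n" for x
    unfolding axis_at_def by simp
  show ?thesis
  proof (intro conjI allI impI)
    show "\<exists>!L. symmetry_axis u L \<and> x \<in> L" for x by (simp add: axes)
    show "y \<in> axis_at u x \<Longrightarrow> axis_at u y = axis_at u x" for x y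
      unfolding axis_at by (rule line_through_start)
    show "axis_at u x = axis_at u y \<or> parallel_lines (axis_at u x) (axis_at u y)" for x y
      unfolding axis_at parallel_lines_def using n(1) by blast
  qed
qed

end
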